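(* Let $f$ satisfy conditions (1) and (2b), and let $n\in\mathbb{N}_0$. Then the series \[ \sum_{k=0}^\infty(-1)^k\frac{p^k}{k!}\,c_{n+2k} \] is absolutely and uniformly convergent for all $p\in[0,\infty)$.
   Context: $f:[0,\infty)\to\mathbb{R}$; $c_n=2\pi\int_0^\infty f(r)\,r^{n+1}dr$. Condition (1): there is a constant $F$ with $0\le f(r)\le F$ for all $r\ge0$, $c_0$ exists and $c_0>0$. Condition (2b): $c_{2n}$ exists for all $n\in\mathbb{N}_0$ and $c_n^{1/n}=o(n^{1/2})$ as $n\to\infty$. *)

theory Defs
  imports "HOL-Analysis.Analysis" "HOL-Library.Landau_Symbols"
begin

definition moment :: "(real \<Rightarrow> real) \<Rightarrow> nat \<Rightarrow> real" where
  "moment f n = 2 * pi * (LINT r:{0..}|lborel. f r * r ^ (n + 1))"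

definition moment_exists :: "(real \<Rightarrow> real) \<Rightarrow> nat \<Rightarrow> bool" where
  "moment_exists f n \<longleftrightarrow> set_integrable lborel {0..} (\<lambda>r. f r * r ^ (n + 1))"

end

theory Submission
  imports Defs "HOL-Real_Asymp.Real_Asymp"
begin

text \<open>Since f is nonnegative, so are all moments, and absolute convergence means convergence
  of the series of p^k c_(n+2k) / k!. For every \<delta> > 0 the growth condition eventually gives
  c_m^2 \<le> (\<delta> m)^m; with m = n + 2k \<le> 3k and k^k / k! \<le> e^k the square of the k-th term
  is at most (3\<delta>)^n k^n (3\<delta> p e)^(2k), which is summably small once 3\<delta> p e \<le> 1/4.
  A power series converging absolutely on all of [0,\<infinity>) has infinite radius of convergence
  and hence converges uniformly on bounded sets.\<close>

lemma power_div_fact_le_exp: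
  fixes x :: real
  assumes "x \<ge> 0"
  shows "x ^ k / fact k \<le> exp x"
proof -
  have "(\<Sum>j\<in>{k}. x ^ j / fact j) \<le> (\<Sum>j. x ^ j / fact j)"
    using summable_exp_generic[of x] assms
    by (intro sum_le_suminf) (auto simp: divide_inverse ac_simps)
  also have "\<dots> = exp x"
    by (simp add: exp_def divide_inverse ac_simps)
  finally show ?thesis by simp
qed

lemma eventually_sq_le_power_if_root_in_o_sqrt:
  fixes a :: "nat \<Rightarrow> real" and \<delta> :: real
  assumes nonneg: "\<And>m. a m \<ge> 0"
    and growth: "(\<lambda>m. a m powr (1 / real m)) \<in> o(\<lambda>m. sqrt (real m))"
    and "\<delta> > 0"
  shows "\<forall>\<^sub>F m in sequentially. (a m)\<^sup>2 \<le> (\<delta> * real m) ^ m"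
proof -
  have "\<forall>\<^sub>F m in sequentially. norm (a m powr (1 / real m)) \<le> sqrt \<delta> * norm (sqrt (real m))"
    using \<open>\<delta> > 0\<close> by (intro landau_o.smallD[OF growth]) simp
  with eventually_gt_at_top[of 0] show ?thesis
  proof eventually_elim
    case (elim m)
    then have root_le: "a m powr (1 / real m) \<le> sqrt \<delta> * sqrt (real m)"
      by simp
    have "a m = (a m powr (1 / real m)) ^ m"
      using nonneg[of m] \<open>m > 0\<close>
      by (cases "a m = 0") (simp_all add: powr_realpow[symmetric] powr_powr)
    also have "\<dots> \<le> (sqrt \<delta> * sqrt (real m)) ^ m"
      by (intro power_mono root_le) simp
    finally have "(a m)\<^sup>2 \<le> ((sqrt \<delta> * sqrt (real m)) ^ m)\<^sup>2"
      using nonneg[of m] by (intro power_mono) auto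
    also have "\<dots> = ((sqrt \<delta> * sqrt (real m))\<^sup>2) ^ m"
      by (simp only: power_mult[symmetric] mult.commute)
    also have "\<dots> = (\<delta> * real m) ^ m"
      using \<open>\<delta> > 0\<close> by (simp add: power_mult_distrib)
    finally show ?case .
  qed
qed

lemma sq_power_div_fact_mult_le:
  fixes p \<delta> x :: real
  assumes "p \<ge> 0" "\<delta> \<ge> 0" "n \<le> k"
    and x_sq: "x\<^sup>2 \<le> (\<delta> * real (n + 2 * k)) ^ (n + 2 * k)"
  shows "(p ^ k / fact k * x)\<^sup>2 \<le> (3 * \<delta> * real k) ^ n * (3 * \<delta> * p * exp 1) ^ (2 * k)"
proof -
  define m where "m = n + 2 * k"
  have "(p ^ k / fact k * x)\<^sup>2 = p ^ (2 * k) * x\<^sup>2 / (fact k)\<^sup>2"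
    by (simp add: power_mult_distrib power_divide power_mult[symmetric] mult.commute)
  also have "\<dots> \<le> p ^ (2 * k) * (\<delta> * real m) ^ m / (fact k)\<^sup>2"
    using x_sq \<open>p \<ge> 0\<close> by (intro divide_right_mono mult_left_mono) (auto simp: m_def)
  also have "\<dots> \<le> p ^ (2 * k) * (\<delta> * (3 * real k)) ^ m / (fact k)\<^sup>2"
    using assms by (intro divide_right_mono mult_left_mono power_mono) (auto simp: m_def)
  also have "\<dots> = (3 * \<delta> * real k) ^ n * (3 * \<delta> * p) ^ (2 * k) * (real k ^ k / fact k)\<^sup>2"
    by (simp add: m_def power_add power_mult_distrib power_divide power_mult[symmetric] mult.commute)
  also have "\<dots> \<le> (3 * \<delta> * real k) ^ n * (3 * \<delta> * p) ^ (2 * k) * (exp (real k))\<^sup>2"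
    using assms by (intro mult_left_mono power_mono power_div_fact_le_exp) auto
  also have "\<dots> = (3 * \<delta> * real k) ^ n * (3 * \<delta> * p * exp 1) ^ (2 * k)"
    using exp_of_nat_mult[of k "1::real"]
    by (simp add: power_mult_distrib power_mult[symmetric] mult.commute)
  finally show ?thesis .
qed

lemma summable_power_div_fact_mult_shifted:
  fixes a :: "nat \<Rightarrow> real" and p :: real
  assumes nonneg: "\<And>m. a m \<ge> 0"
    and growth: "(\<lambda>m. a m powr (1 / real m)) \<in> o(\<lambda>m. sqrt (real m))"
    and "p \<ge> 0"
  shows "summable (\<lambda>k. p ^ k / fact k * a (n + 2 * k))"
proof -
  define \<delta> where "\<delta> = 1 / (12 * exp 1 * (p + 1))"
  have "\<delta> > 0"
    using \<open>p \<ge> 0\<close> by (simp add: \<delta>_def)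
  have ratio: "3 * \<delta> * p * exp 1 \<le> 1 / 4"
    using \<open>p \<ge> 0\<close> by (simp add: \<delta>_def divide_simps)
  define C where "C = (3 * \<delta>) ^ n"
  have "C \<ge> 0"
    using \<open>\<delta> > 0\<close> by (simp add: C_def)
  obtain M where M: "\<And>m. m \<ge> M \<Longrightarrow> (a m)\<^sup>2 \<le> (\<delta> * real m) ^ m"
    using eventually_sq_le_power_if_root_in_o_sqrt[OF nonneg growth \<open>\<delta> > 0\<close>]
    by (auto simp: eventually_sequentially)
  have poly_le_exp: "\<forall>\<^sub>F k in sequentially. real k ^ n \<le> 4 ^ k"
    by real_asymp
  define t where "t = (\<lambda>k. p ^ k / fact k * a (n + 2 * k))"
  have "\<forall>\<^sub>F k in sequentially. norm (t k) \<le> sqrt C * (1 / 2) ^ k"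
    using poly_le_exp eventually_ge_at_top[of "max M n"]
  proof eventually_elim
    case (elim k)
    have "(t k)\<^sup>2 \<le> (3 * \<delta> * real k) ^ n * (3 * \<delta> * p * exp 1) ^ (2 * k)"
      unfolding t_def using elim \<open>p \<ge> 0\<close> \<open>\<delta> > 0\<close> by (intro sq_power_div_fact_mult_le M) auto
    also have "\<dots> = C * real k ^ n * (3 * \<delta> * p * exp 1) ^ (2 * k)"
      by (simp add: C_def power_mult_distrib)
    also have "\<dots> \<le> C * real k ^ n * (1 / 4) ^ (2 * k)"
      using \<open>p \<ge> 0\<close> \<open>\<delta> > 0\<close> \<open>C \<ge> 0\<close> ratio
      by (intro mult_left_mono power_mono) auto
    also have "\<dots> \<le> C * 4 ^ k * (1 / 4) ^ (2 * k)"
      using elim \<open>C \<ge> 0\<close> by (intro mult_right_mono mult_left_mono) auto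
    also have "\<dots> = C * (1 / 4) ^ k"
      by (simp add: mult_2 power_add power_mult_distrib[symmetric])
    finally have "\<bar>t k\<bar> \<le> sqrt (C * (1 / 4) ^ k)"
      by (subst real_sqrt_abs[symmetric]) (rule real_sqrt_le_mono)
    also have "\<dots> = sqrt C * (1 / 2) ^ k"
      by (simp add: real_sqrt_mult real_sqrt_power real_sqrt_divide)
    finally show ?case
      by simp
  qed
  then have "summable t"
    by (rule summable_comparison_test_ev) (intro summable_mult summable_geometric, simp)
  then show ?thesis
    unfolding t_def .
qed

lemma moment_nonneg:
  assumes "\<And>r. r \<ge> 0 \<Longrightarrow> f r \<ge> 0"
  shows "moment f m \<ge> 0"
proof -
  have "0 \<le> (LINT r:{0..}|lborel. f r * r ^ (m + 1))"
    unfolding set_lebesgue_integral_def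
    by (intro integral_nonneg_AE AE_I2) (auto simp: indicator_def assms)
  then show ?thesis
    by (simp add: moment_def)
qed

lemma entire_powser_uniformly_convergent:
  fixes c :: "nat \<Rightarrow> 'a::{real_normed_div_algebra,banach}"
  assumes "\<And>r. r \<ge> 0 \<Longrightarrow> summable (\<lambda>k. norm (c k) * r ^ k)"
  shows "uniformly_convergent_on (cball \<xi> P) (\<lambda>N x. \<Sum>k<N. c k * (x - \<xi>) ^ k)"
proof -
  have "conv_radius c = \<infinity>"
  proof (rule conv_radius_inftyI')
    fix r :: real assume "r > 0"
    then have "summable (\<lambda>k. norm (c k * of_real r ^ k))"
      using assms[of r] by (simp add: norm_mult norm_power)
    then have "summable (\<lambda>k. c k * of_real r ^ k)"
      by (rule summable_norm_cancel)
    with \<open>r > 0\<close> show "\<exists>z. norm z = r \<and> summable (\<lambda>k. c k * z ^ k)"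
      by (intro exI[of _ "of_real r"]) simp
  qed
  then show ?thesis
    by (intro powser_uniformly_convergent) simp
qed

theorem lemma8:
  fixes f :: "real \<Rightarrow> real" and F :: real and n :: nat
  assumes cond1_bound: "\<And>r. r \<ge> 0 \<Longrightarrow> 0 \<le> f r \<and> f r \<le> F"
      and cond1_c0: "moment_exists f 0" "moment f 0 > 0"
      and cond2b_ex: "\<And>m. moment_exists f (2 * m)"
      and cond2b_growth: "(\<lambda>m. moment f m powr (1 / real m)) \<in> o(\<lambda>m. sqrt (real m))"
  shows "\<forall>p\<ge>0. summable (\<lambda>k. \<bar>(-1) ^ k * p ^ k / fact k * moment f (n + 2 * k)\<bar>)
       \<and> (\<forall>P\<ge>0. uniformly_convergent_on {0..P}
           (\<lambda>N p. \<Sum>k<N. (-1) ^ k * p ^ k / fact k * moment f (n + 2 * k)))"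
proof -
  \<comment> \<open>Only f \<ge> 0 and the growth condition are needed; the other hypotheses merely ensure
    that the moments are genuine integrals rather than the junk value 0 of a
    non-integrable Lebesgue integral.\<close>
  define a where "a k = (-1) ^ k / fact k * moment f (n + 2 * k)" for k
  have term_eq: "a k * p ^ k = (-1) ^ k * p ^ k / fact k * moment f (n + 2 * k)" for k and p :: real
    by (simp add: a_def)
  have nonneg: "moment f m \<ge> 0" for m
    using cond1_bound by (intro moment_nonneg) simp
  have series_eq:
      "norm (a k) * p ^ k = p ^ k / fact k * moment f (n + 2 * k)"
      "\<bar>(-1) ^ k * p ^ k / fact k * moment f (n + 2 * k)\<bar> = p ^ k / fact k * moment f (n + 2 * k)"
    if "p \<ge> 0" for k and p :: real
    using that nonneg[of "n + 2 * k"] by (simp_all add: a_def abs_mult)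
  have a_summable: "summable (\<lambda>k. norm (a k) * p ^ k)" if "p \<ge> 0" for p :: real
    using summable_power_div_fact_mult_shifted[OF nonneg cond2b_growth that]
    by (simp only: series_eq[OF that])
  have "summable (\<lambda>k. \<bar>(-1) ^ k * p ^ k / fact k * moment f (n + 2 * k)\<bar>)" if "p \<ge> 0" for p :: real
    using summable_power_div_fact_mult_shifted[OF nonneg cond2b_growth that]
    by (simp only: series_eq[OF that])
  moreover have "uniformly_convergent_on {0..P}
      (\<lambda>N p. \<Sum>k<N. (-1) ^ k * p ^ k / fact k * moment f (n + 2 * k))" for P :: real
  proof -
    have "uniformly_convergent_on (cball 0 P) (\<lambda>N p. \<Sum>k<N. a k * (p - 0) ^ k)"
      using a_summable by (rule entire_powser_uniformly_convergent)
    from this[unfolded diff_zero term_eq] show ?thesis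
      by (rule uniformly_convergent_on_subset) auto
  qed
  ultimately show ?thesis
    by blast
qed

end
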